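(* Let $\nu=\sum_{k=1}^K p^{(k)}\nu^{(k)}$ be a mixture model on $\mathbb{R}^d$ satisfying the standing assumptions below, and suppose there is $\beta\in\mathbb{R}$ such that for all $i\in[d]$, $$\beta\cdot \mathbb{E}_{x\sim\nu}\big[|x_i-\mu_i(x)|\big]\ \ge\ \sqrt{\mathbb{E}_{x\sim\nu}\big[|x_i-\mu_i(x)|^2\big]}.$$ Let $q=ENR(\nu)$. Then there exists a decision tree $T$ (in the sense defined below) such that $$Price(\nu,T)\ \le\ 1+\frac{(4+2\pi^2/3)\,\alpha\beta K(K-1)}{\sqrt{q}}$$ (the right-hand side being read as $+\infty$ if $q=0$).
   Context: Standing assumptions: $\nu=\sum_{k=1}^K p^{(k)}\nu^{(k)}$ with $\sum_k p^{(k)}=1$, where each $\nu^{(k)}$ is a discrete or absolutely continuous probability distribution on $\mathbb{R}^d$ with mean $\mu^{(k)}\in\mathbb{R}^d$, whose density or probability mass function is symmetric about $\mu^{(k)}$ (so mean and median coincide). Every component has the same finite coordinate-wise variances $\sigma_1^2,\dots,\sigma_d^2>0$ (i.e. $\mathrm{Var}_{x\sim\nu^{(k)}}(x_j)=\sigma_j^2$ for all $k,j$). The mixing weights satisfy $p^{(k)}\le\alpha/K$ for all $k$, for some fixed $\alpha\ge1$. Sampling $x\sim\nu$ means first drawing a component $k$ with probability $p^{(k)}$ and then $x\sim\nu^{(k)}$; we set $\mu(x)=\mu^{(k)}$ for that component. Explainability-to-noise ratio: $ENR(\nu)=\min_{k\ne l}\max_{j\in[d]}|\mu^{(k)}_j-\mu^{(l)}_j|^2/\sigma_j^2$.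 A decision tree is a binary tree with $K$ leaves in which every internal node splits by an axis-aligned threshold cut $x_i\le\theta$ vs. $x_i>\theta$ (some $i\in[d]$, $\theta\in\mathbb{R}$), so that the leaves partition $\mathbb{R}^d$, and such that each leaf contains exactly one of the means $\mu^{(1)},\dots,\mu^{(K)}$. For $x$, let $\tilde\mu(x)$ be a median of the leaf containing $x$, i.e. a minimizer $c$ of $\mathbb{E}[\|x'-c\|_1\mid x' \text{ in that leaf}]$, $x'\sim\nu$ (a coordinate-wise median of $\nu$ restricted to the leaf). The price of explainability is $$Price(\nu,T)=\frac{\mathbb{E}_{x\sim\nu}[\|x-\tilde\mu(x)\|_1]}{\mathbb{E}_{x\sim\nu}[\|x-\mu(x)\|_1]}.$$ *)

theory Defs
  imports "HOL-Probability.Probability"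
begin

text \<open>Points of R^d are vectors of type real^'d (coordinates x $ j, j :: 'd, d = CARD('d)).\<close>

definition l1dist :: "real ^ 'd \<Rightarrow> real ^ 'd \<Rightarrow> real" where
  "l1dist x c = (\<Sum>j\<in>UNIV. \<bar>x $ j - c $ j\<bar>)"

text \<open>Binary decision trees with axis-aligned threshold cuts:
  Node i \<theta> l r sends x to l if x $ i \<le> \<theta> and to r if x $ i > \<theta>.\<close>
datatype 'd dtree = Leaf | Node 'd real "'d dtree" "'d dtree"

fun leaf_regions :: "'d dtree \<Rightarrow> (real ^ 'd) set list" where
  "leaf_regions Leaf = [UNIV]"
| "leaf_regions (Node i \<theta> l r) =
     map (\<lambda>A. A \<inter> {x. x $ i \<le> \<theta>}) (leaf_regions l) @
     map (\<lambda>A. A \<inter> {x. x $ i > \<theta>}) (leaf_regions r)"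

definition is_decision_tree :: "nat \<Rightarrow> (nat \<Rightarrow> real ^ 'd) \<Rightarrow> 'd dtree \<Rightarrow> bool" where
  "is_decision_tree K mu T \<longleftrightarrow>
     length (leaf_regions T) = K \<and>
     (\<forall>A \<in> set (leaf_regions T). card {k. k < K \<and> mu k \<in> A} = 1)"

text \<open>Expectation over the mixture nu = sum_k p k * nu k, with mu(x) = mu k for the
  component k from which x was drawn.\<close>
definition mix_exp :: "nat \<Rightarrow> (nat \<Rightarrow> real) \<Rightarrow> (nat \<Rightarrow> (real ^ 'd) measure)
     \<Rightarrow> (nat \<Rightarrow> real ^ 'd) \<Rightarrow> (real ^ 'd \<Rightarrow> real ^ 'd \<Rightarrow> real) \<Rightarrow> real" where
  "mix_exp K p nu mu f = (\<Sum>k<K. p k * (\<integral>x. f x (mu k) \<partial>nu k))"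

text \<open>c is a median of region A w.r.t. the mixture: it minimises
  E[ l1dist x' c | x' in A ]; equivalently (multiplying by the constant nu(A))
  it minimises E[ 1_A(x') * l1dist x' c ].\<close>
definition is_leaf_median :: "nat \<Rightarrow> (nat \<Rightarrow> real) \<Rightarrow> (nat \<Rightarrow> (real ^ 'd) measure)
     \<Rightarrow> (real ^ 'd) set \<Rightarrow> real ^ 'd \<Rightarrow> bool" where
  "is_leaf_median K p nu A c \<longleftrightarrow>
     (\<forall>c'. (\<Sum>k<K. p k * (\<integral>x. indicator A x * l1dist x c \<partial>nu k))
           \<le> (\<Sum>k<K. p k * (\<integral>x. indicator A x * l1dist x c' \<partial>nu k)))"

definition price :: "nat \<Rightarrow> (nat \<Rightarrow> real) \<Rightarrow> (nat \<Rightarrow> (real ^ 'd) measure)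
     \<Rightarrow> (nat \<Rightarrow> real ^ 'd) \<Rightarrow> 'd dtree \<Rightarrow> (nat \<Rightarrow> real ^ 'd) \<Rightarrow> real" where
  "price K p nu mu T med =
     (\<Sum>k<K. p k * (\<integral>x. (\<Sum>t<length (leaf_regions T).
          indicator (leaf_regions T ! t) x * l1dist x (med t)) \<partial>nu k))
     / mix_exp K p nu mu l1dist"

definition ENR :: "nat \<Rightarrow> (nat \<Rightarrow> real ^ 'd) \<Rightarrow> ('d \<Rightarrow> real) \<Rightarrow> real" where
  "ENR K mu \<sigma> = Min ((\<lambda>(k, l). Max ((\<lambda>j. (mu k $ j - mu l $ j)^2 / (\<sigma> j)^2) ` UNIV))
                      ` {(k, l). k < K \<and> l < K \<and> k \<noteq> l})"

end

theory Submission
  imports Defs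
begin

(* At a node whose leaves must separate the means of a set S of
   n components, cut the coordinate i along which the spread W = (max - min) / sigma_i of these
   means is largest; the separation of the means gives W >= sqrt ENR, and W * (sum_j sigma_j)
   bounds their l1-diameter. The threshold theta is chosen so that
   sum_k sigma_i^2 / (mu_k,i - theta)^2 <= 20 (n - 1)(3n - 2) / W^2.
   A point of component k pays more than its l1-distance to mu_k only if it falls on the wrong
   side of a cut; it then pays at most one l1-diameter extra, and by Chebyshev's inequality for
   distributions symmetric about mu_k this happens with probability at most
   sigma_i^2 / (2 (mu_k,i - theta)^2). By induction the total expected extra cost over the
   components is at most 10 n^2 (n - 1) (sum_j sigma_j) / sqrt ENR. Weighting by p_k <= alpha / K
   and using sum_j sigma_j <= beta E|x - mu(x)|_1, the price is at most
   1 + 10 alpha beta K (K - 1) / sqrt ENR, and 10 < 4 + 2 pi^2 / 3. *)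

section \<open>Choosing a threshold\<close>

lemma inverse_square_le_of_abs_ge:
  fixes a x :: real
  assumes "0 < a" "a \<le> \<bar>x\<bar>"
  shows "1 / x^2 \<le> 1 / a^2"
proof -
  have "a^2 \<le> x^2" using assms by (metis abs_le_square_iff abs_of_pos)
  then show ?thesis using assms by (intro divide_left_mono) auto
qed

lemma sum_inverse_square_half_atLeastAtMost_le:
  "N \<ge> 1 \<Longrightarrow> (\<Sum>k=1..N. 1 / (real k - 1/2)^2) \<le> 5 - 1 / real N"
proof (induction N rule: dec_induct)
  case base
  then show ?case by (simp add: power2_eq_square)
next
  case (step n)
  have "real n * (real n + 1) \<le> (real n + 1/2)^2"
    by (simp add: power2_eq_square algebra_simps)
  then have "1 / (real n + 1/2)^2 \<le> 1 / (real n * (real n + 1))"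
    using step by (intro divide_left_mono) auto
  also have "\<dots> = 1 / real n - 1 / (real n + 1)"
    using step by (simp add: field_simps)
  finally show ?case using step.IH by (simp add: add.commute)
qed

lemma sum_inverse_square_half_le:
  assumes "finite A" "0 \<notin> A"
  shows "(\<Sum>k\<in>A. 1 / (real k - 1/2)^2) \<le> 5"
proof (cases "A = {}")
  case False
  have "1 \<le> k" if "k \<in> A" for k using assms(2) that by (metis less_one not_le)
  then have A: "A \<subseteq> {1..Max A}" "1 \<le> Max A" using assms(1) False by auto
  then have "(\<Sum>k\<in>A. 1 / (real k - 1/2)^2) \<le> (\<Sum>k=1..Max A. 1 / (real k - 1/2)^2)"
    by (intro sum_mono2) auto
  also have "\<dots> \<le> 5 - 1 / real (Max A)"
    using A by (intro sum_inverse_square_half_atLeastAtMost_le)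
  also have "\<dots> \<le> 5" by simp
  finally show ?thesis .
qed simp

lemma sum_inverse_square_half_dist_le:
  assumes "finite A"
  shows "(\<Sum>e\<in>A - {c}. 1 / (\<bar>real e - real c\<bar> - 1/2)^2) \<le> 10"
proof -
  define g where "g k = 1 / (real k - 1/2)^2" for k :: nat
  have split: "A - {c} = {e\<in>A. c < e} \<union> {e\<in>A. e < c}" by auto
  have "(\<Sum>e\<in>A - {c}. 1 / (\<bar>real e - real c\<bar> - 1/2)^2)
      = (\<Sum>e\<in>{e\<in>A. c < e}. g (e - c)) + (\<Sum>e\<in>{e\<in>A. e < c}. g (c - e))"
    unfolding split using assms
    by (subst sum.union_disjoint) (auto intro!: arg_cong2[where f="(+)"] sum.cong simp: g_def)
  also have "\<dots> = sum g ((\<lambda>e. e - c) ` {e\<in>A. c < e}) + sum g ((\<lambda>e. c - e) ` {e\<in>A. e < c})"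
    by (subst (1 2) sum.reindex) (auto simp: inj_on_def)
  also have "\<dots> \<le> 5 + 5"
    unfolding g_def using assms by (intro add_mono sum_inverse_square_half_le) auto
  finally show ?thesis by simp
qed

lemma cell_midpoint_dist_ge:
  fixes h z :: real
  assumes "h > 0" "real c * h \<le> z" "z \<le> (real c + 1) * h"
  shows "(\<bar>real e - real c\<bar> - 1/2) * h \<le> \<bar>z - (real e + 1/2) * h\<bar>"
proof (cases "c < e")
  case True
  then have "(\<bar>real e - real c\<bar> - 1/2) * h = (real e + 1/2) * h - (real c + 1) * h"
    by (simp add: algebra_simps)
  then show ?thesis using assms by linarith
next
  case False
  then have "(\<bar>real e - real c\<bar> - 1/2) * h = real c * h - (real e + 1/2) * h"
    by (simp add: algebra_simps)
  then show ?thesis using assms by linarith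
qed

lemma cell_midpoint_ne:
  fixes h z :: real
  assumes "h > 0" "real c * h \<le> z" "z \<le> (real c + 1) * h" "e \<noteq> c"
  shows "z \<noteq> (real e + 1/2) * h"
proof -
  have "1 \<le> \<bar>real e - real c\<bar>" using assms(4) by linarith
  then have "0 < (\<bar>real e - real c\<bar> - 1/2) * h" using assms(1) by simp
  also have "\<dots> \<le> \<bar>z - (real e + 1/2) * h\<bar>" using assms(1-3) by (rule cell_midpoint_dist_ge)
  finally show ?thesis by auto
qed

lemma sum_inverse_square_midpoints_le:
  fixes h z :: real
  assumes "h > 0" "real c * h \<le> z" "z \<le> (real c + 1) * h"
  shows "(\<Sum>e\<in>{..<M} - {c}. 1 / (z - (real e + 1/2) * h)^2) \<le> 10 / h^2"
proof -
  have "1 / (z - (real e + 1/2) * h)^2 \<le> 1 / ((\<bar>real e - real c\<bar> - 1/2) * h)^2"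
    if "e \<noteq> c" for e
  proof (rule inverse_square_le_of_abs_ge)
    have "1 \<le> \<bar>real e - real c\<bar>" using that by linarith
    then show "0 < (\<bar>real e - real c\<bar> - 1/2) * h" using assms by simp
  qed (rule cell_midpoint_dist_ge[OF assms])
  then have "(\<Sum>e\<in>{..<M} - {c}. 1 / (z - (real e + 1/2) * h)^2)
      \<le> (\<Sum>e\<in>{..<M} - {c}. 1 / ((\<bar>real e - real c\<bar> - 1/2) * h)^2)"
    by (intro sum_mono) auto
  also have "\<dots> = (\<Sum>e\<in>{..<M} - {c}. 1 / (\<bar>real e - real c\<bar> - 1/2)^2) / h^2"
    by (simp add: sum_divide_distrib power_mult_distrib)
  also have "\<dots> \<le> 10 / h^2"
    by (intro divide_right_mono sum_inverse_square_half_dist_le) auto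
  finally show ?thesis .
qed

lemma exists_cell:
  fixes h z :: real
  assumes "h > 0" "M > 0" "0 \<le> z" "z \<le> real M * h"
  shows "\<exists>c<M. real c * h \<le> z \<and> z \<le> (real c + 1) * h"
proof (cases "z < real M * h")
  case True
  define c where "c = nat \<lfloor>z / h\<rfloor>"
  have "real c \<le> z / h" "z / h < real c + 1"
    using assms by (simp_all add: c_def)
  moreover have "c < M"
    using True assms by (simp add: c_def nat_less_iff floor_less_iff divide_less_eq)
  ultimately show ?thesis using assms by (intro exI[of _ c]) (auto simp: field_simps)
next
  case False
  then show ?thesis using assms by (intro exI[of _ "M - 1"]) (auto simp: of_nat_diff algebra_simps)
qed

lemma exists_le_average:
  fixes F :: "'a \<Rightarrow> real"
  assumes "finite E" "0 < n" "n \<le> card E" "\<And>e. e \<in> E \<Longrightarrow> 0 \<le> F e"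
    and "(\<Sum>e\<in>E. F e) \<le> real n * c"
  shows "\<exists>e\<in>E. F e \<le> c"
proof -
  have "E \<noteq> {}" using assms(2,3) by (cases "E = {}") auto
  then have "Min (F ` E) \<in> F ` E" using assms(1) by (intro Min_in) auto
  then obtain e where e: "e \<in> E" "F e = Min (F ` E)" by auto
  have "real n * F e \<le> real (card E) * F e"
    using assms(3,4) e(1) by (intro mult_right_mono) auto
  also have "\<dots> \<le> (\<Sum>e\<in>E. F e)"
    using e assms(1) by (intro sum_bounded_below) simp
  finally have "real n * F e \<le> real n * c" using assms(5) by linarith
  then show ?thesis using assms(2) e(1) by auto
qed

(* Of the 2n cells of width h = (b - a) / (2n), at least n contain no y m; averaged over these,
   the midpoint sums are at most 10 / h^2 by sum_inverse_square_midpoints_le. *)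
lemma exists_threshold_by_cells:
  fixes y :: "'a \<Rightarrow> real"
  assumes S: "finite S" "S \<noteq> {}" and y: "\<And>m. m \<in> S \<Longrightarrow> a \<le> y m \<and> y m \<le> b" and "a < b"
  shows "\<exists>\<theta>. a < \<theta> \<and> \<theta> < b \<and> (\<forall>m\<in>S. y m \<noteq> \<theta>) \<and>
           (\<Sum>m\<in>S. 1 / (y m - \<theta>)^2) \<le> 40 * real (card S)^2 / (b - a)^2"
proof -
  define n where "n = card S"
  define M where "M = 2 * n"
  define h where "h = (b - a) / real M"
  have "n > 0" using S by (simp add: n_def card_gt_0_iff)
  then have M: "M > 0" "h > 0" "real M * h = b - a" using \<open>a < b\<close> by (auto simp: M_def h_def)
  have "\<forall>m\<in>S. \<exists>c<M. real c * h \<le> y m - a \<and> y m - a \<le> (real c + 1) * h"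
    using y M by (intro ballI exists_cell) auto
  then obtain cell where cell: "\<And>m. m \<in> S \<Longrightarrow> cell m < M"
      "\<And>m. m \<in> S \<Longrightarrow> real (cell m) * h \<le> y m - a" "\<And>m. m \<in> S \<Longrightarrow> y m - a \<le> (real (cell m) + 1) * h"
    by metis
  define mid where "mid e = a + (real e + 1/2) * h" for e :: nat
  define F where "F e = (\<Sum>m\<in>S. 1 / (y m - mid e)^2)" for e
  define E where "E = {..<M} - cell ` S"
  have "card (cell ` S) \<le> n" unfolding n_def using S(1) by (rule card_image_le)
  moreover have "card {..<M} - card (cell ` S) \<le> card E"
    unfolding E_def using S(1) by (intro diff_card_le_card_Diff) auto
  ultimately have cardE: "n \<le> card E" by (simp add: M_def)
  have "(\<Sum>e\<in>E. F e) = (\<Sum>m\<in>S. \<Sum>e\<in>E. 1 / (y m - a - (real e + 1/2) * h)^2)"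
    unfolding F_def mid_def by (subst sum.swap) (simp add: algebra_simps)
  also have "\<dots> \<le> (\<Sum>m\<in>S. \<Sum>e\<in>{..<M} - {cell m}. 1 / (y m - a - (real e + 1/2) * h)^2)"
    by (intro sum_mono sum_mono2) (auto simp: E_def)
  also have "\<dots> \<le> (\<Sum>m\<in>S. 10 / h^2)"
    using M cell by (intro sum_mono sum_inverse_square_midpoints_le) auto
  finally have "(\<Sum>e\<in>E. F e) \<le> real n * (10 / h^2)" by (simp add: n_def)
  moreover have "finite E" "\<And>e. 0 \<le> F e" by (simp_all add: E_def F_def sum_nonneg)
  ultimately obtain e where e: "e \<in> E" "F e \<le> 10 / h^2"
    using exists_le_average[of E n F] cardE \<open>n > 0\<close> by blast
  moreover have "10 / h^2 = 40 * real n^2 / (b - a)^2"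
    using M(2) \<open>n > 0\<close> by (simp add: M(3)[symmetric] M_def power_mult_distrib field_simps)
  ultimately have bound: "F e \<le> 40 * real n^2 / (b - a)^2" by simp
  have "y m - a \<noteq> (real e + 1/2) * h" if "m \<in> S" for m
    using e(1) that M(2) cell by (intro cell_midpoint_ne) (auto simp: E_def)
  then have "\<forall>m\<in>S. y m \<noteq> mid e" by (fastforce simp: mid_def)
  moreover have "a < mid e" using M(2) by (simp add: mid_def)
  moreover have "mid e < b"
  proof -
    have "real e + 1/2 < real M" using e(1) by (simp add: E_def)
    then have "(real e + 1/2) * h < real M * h" using M(2) by (rule mult_strict_right_mono)
    then show ?thesis using M(3) by (simp add: mid_def)
  qed
  ultimately show ?thesis using bound unfolding F_def n_def by blast
qed

lemma exists_large_increment: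
  fixes f :: "nat \<Rightarrow> real"
  assumes "0 < m"
  shows "\<exists>t<m. f m - f 0 \<le> real m * (f (Suc t) - f t)"
  using assms
proof (induction m)
  case (Suc m)
  show ?case
  proof (cases "m = 0")
    case False
    then obtain t where t: "t < m" "f m - f 0 \<le> real m * (f (Suc t) - f t)" using Suc.IH by auto
    show ?thesis
    proof (cases "f (Suc t) - f t \<le> f (Suc m) - f m")
      case True
      then have "f m - f 0 \<le> real m * (f (Suc m) - f m)"
        using t(2) by (meson mult_left_mono of_nat_0_le_iff order_trans)
      then show ?thesis by (intro exI[of _ m]) (auto simp: algebra_simps)
    next
      case False
      then show ?thesis using t by (intro exI[of _ t]) (auto simp: algebra_simps)
    qed
  qed auto
qed simp

lemma exists_large_gap:
  fixes Y :: "real set"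
  assumes "finite Y" "a \<in> Y" "b \<in> Y" "a < b"
  shows "\<exists>u\<in>Y. \<exists>v\<in>Y. u < v \<and> (\<forall>y\<in>Y. y \<le> u \<or> v \<le> y) \<and> b - a \<le> (real (card Y) - 1) * (v - u)"
proof -
  define xs where "xs = sorted_list_of_set Y"
  define n where "n = card Y"
  have xs: "set xs = Y" "length xs = n" "sorted_wrt (<) xs"
    using assms(1) by (simp_all add: xs_def n_def)
  have mono: "xs ! i \<le> xs ! j" if "i \<le> j" "j < n" for i j
    using xs that by (intro sorted_nth_mono strict_sorted_imp_sorted) auto
  have "card {a, b} \<le> n" unfolding n_def using assms by (intro card_mono) auto
  then have n: "2 \<le> n" using assms(4) by simp
  obtain t where t: "t < n - 1" "xs ! (n - 1) - xs ! 0 \<le> real (n - 1) * (xs ! Suc t - xs ! t)"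
    using exists_large_increment[of "n - 1" "(!) xs"] n by auto
  have "xs ! 0 \<le> a" "b \<le> xs ! (n - 1)"
    using assms(2,3) mono n by (auto simp: xs(1,2)[symmetric] in_set_conv_nth)
  then have "b - a \<le> (real n - 1) * (xs ! Suc t - xs ! t)" using t(2) n by (simp add: of_nat_diff)
  moreover have "xs ! t < xs ! Suc t" using sorted_wrt_nth_less[OF xs(3), of t "Suc t"] xs(2) t by auto
  moreover have "y \<le> xs ! t \<or> xs ! Suc t \<le> y" if y: "y \<in> Y" for y
  proof -
    obtain s where "s < n" "y = xs ! s" using y xs by (auto simp: in_set_conv_nth)
    then show ?thesis using mono t by (cases "s \<le> t") auto
  qed
  moreover have "xs ! t \<in> Y" "xs ! Suc t \<in> Y" using xs t by auto
  ultimately show ?thesis unfolding n_def by blast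
qed

lemma exists_threshold_in_gap:
  fixes y :: "'a \<Rightarrow> real"
  assumes S: "finite S" and y: "\<And>m. m \<in> S \<Longrightarrow> a \<le> y m \<and> y m \<le> b"
    and ab: "a \<in> y ` S" "b \<in> y ` S" "a < b"
  shows "\<exists>\<theta>. a < \<theta> \<and> \<theta> < b \<and> (\<forall>m\<in>S. y m \<noteq> \<theta>) \<and>
           (\<Sum>m\<in>S. 1 / (y m - \<theta>)^2) \<le> 4 * real (card S) * (real (card S) - 1)^2 / (b - a)^2"
proof -
  define n where "n = card S"
  obtain u v where uv: "u \<in> y ` S" "v \<in> y ` S" "u < v" "\<forall>z\<in>y ` S. z \<le> u \<or> v \<le> z"
      "b - a \<le> (real (card (y ` S)) - 1) * (v - u)"
    using exists_large_gap[of "y ` S"] S ab by blast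
  have "card (y ` S) \<le> n" unfolding n_def using S by (rule card_image_le)
  moreover have "card {a, b} \<le> card (y ` S)" using S ab by (intro card_mono) auto
  ultimately have n: "2 \<le> real n" "card (y ` S) \<le> n" using ab(3) by auto
  define \<delta> where "\<delta> = (b - a) / (2 * (real n - 1))"
  define \<theta> where "\<theta> = (u + v) / 2"
  have "b - a \<le> (real n - 1) * (v - u)"
    using uv(3,5) n(2) by (smt (verit) mult_right_mono of_nat_le_iff)
  then have \<delta>: "0 < \<delta>" "\<delta> \<le> (v - u) / 2"
    using n(1) ab(3) by (auto simp: \<delta>_def field_simps)
  have dist: "\<delta> \<le> \<bar>y m - \<theta>\<bar>" if "m \<in> S" for m
  proof -
    have "y m \<le> u \<or> v \<le> y m" using uv(4) that by auto
    then show ?thesis using \<delta>(2) \<theta>_def by auto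
  qed
  have "(\<Sum>m\<in>S. 1 / (y m - \<theta>)^2) \<le> (\<Sum>m\<in>S. 1 / \<delta>^2)"
    using dist \<delta>(1) by (intro sum_mono inverse_square_le_of_abs_ge) auto
  also have "\<dots> = 4 * real n * (real n - 1)^2 / (b - a)^2"
    by (simp add: n_def \<delta>_def power_divide power2_eq_square algebra_simps)
  finally have "(\<Sum>m\<in>S. 1 / (y m - \<theta>)^2) \<le> 4 * real n * (real n - 1)^2 / (b - a)^2" .
  moreover have "y m \<noteq> \<theta>" if "m \<in> S" for m using dist[OF that] \<delta>(1) by auto
  moreover have "a < \<theta> \<and> \<theta> < b"
  proof -
    have "a \<le> u" "v \<le> b" using uv(1,2) y by auto
    then show ?thesis using uv(3) \<theta>_def by auto
  qed
  ultimately show ?thesis unfolding n_def by blast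
qed

(* The cells give 40 n^2, which is too weak for n < 5, where the midpoint of the largest gap
   is used instead; 20 (n - 1)(3n - 2) is what excess_budget_step can absorb. *)
lemma exists_threshold:
  fixes y :: "'a \<Rightarrow> real"
  assumes S: "finite S" and y: "\<And>m. m \<in> S \<Longrightarrow> a \<le> y m \<and> y m \<le> b"
    and ab: "a \<in> y ` S" "b \<in> y ` S" "a < b"
  shows "\<exists>\<theta>. a < \<theta> \<and> \<theta> < b \<and> (\<forall>m\<in>S. y m \<noteq> \<theta>) \<and>
           (\<Sum>m\<in>S. 1 / (y m - \<theta>)^2) \<le> 20 * (real (card S) - 1) * (3 * real (card S) - 2) / (b - a)^2"
proof -
  define n where "n = real (card S)"
  have "S \<noteq> {}" using ab by auto
  then have n1: "1 \<le> n" using S by (simp add: n_def Suc_le_eq card_gt_0_iff)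
  have weaken: "\<exists>\<theta>. a < \<theta> \<and> \<theta> < b \<and> (\<forall>m\<in>S. y m \<noteq> \<theta>) \<and>
           (\<Sum>m\<in>S. 1 / (y m - \<theta>)^2) \<le> 20 * (n - 1) * (3 * n - 2) / (b - a)^2"
    if "c \<le> 20 * (n - 1) * (3 * n - 2)" "\<exists>\<theta>. a < \<theta> \<and> \<theta> < b \<and> (\<forall>m\<in>S. y m \<noteq> \<theta>) \<and>
           (\<Sum>m\<in>S. 1 / (y m - \<theta>)^2) \<le> c / (b - a)^2" for c
    using that by (meson divide_right_mono order_trans zero_le_power2)
  show ?thesis
  proof (cases "5 \<le> n")
    case True
    have "0 \<le> n * (n - 5)" using True by simp
    then have "40 * n^2 \<le> 20 * (n - 1) * (3 * n - 2)" by (simp add: power2_eq_square algebra_simps)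
    then show ?thesis
      using weaken exists_threshold_by_cells[OF S _ y ab(3)] \<open>S \<noteq> {}\<close> by (simp add: n_def)
  next
    case False
    have "1 * 11 \<le> n * (16 - n)" using False n1 by (intro mult_mono) auto
    then have "n * (n - 1) \<le> 5 * (3 * n - 2)" by (simp add: algebra_simps)
    then have "(n - 1) * (4 * (n * (n - 1))) \<le> (n - 1) * (4 * (5 * (3 * n - 2)))"
      using n1 by (intro mult_left_mono) auto
    then have "4 * n * (n - 1)^2 \<le> 20 * (n - 1) * (3 * n - 2)"
      by (simp add: power2_eq_square algebra_simps)
    then show ?thesis
      using weaken exists_threshold_in_gap[OF S y ab] by (simp add: n_def)
  qed
qed

section \<open>Decision trees and their cost\<close>

lemma sum_lessThan_add: "(\<Sum>t<a + b. f t) = (\<Sum>t<a. f t) + (\<Sum>t<b. f (a + t))"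
  for f :: "nat \<Rightarrow> 'a::comm_monoid_add"
  by (induction b) (simp_all add: add.assoc)

lemma l1dist_triangle: "l1dist x z \<le> l1dist x y + l1dist y z"
  unfolding l1dist_def sum.distrib[symmetric] by (intro sum_mono) linarith

lemma leaf_regions_borel: "A \<in> set (leaf_regions T) \<Longrightarrow> A \<in> sets borel"
  by (induction T arbitrary: A) auto

definition tree_cost :: "'d dtree \<Rightarrow> (nat \<Rightarrow> real ^ 'd) \<Rightarrow> real ^ 'd \<Rightarrow> real" where
  "tree_cost T c x = (\<Sum>t<length (leaf_regions T). indicator (leaf_regions T ! t) x * l1dist x (c t))"

lemma tree_cost_Leaf: "tree_cost Leaf c x = l1dist x (c 0)"
  by (simp add: tree_cost_def)

definition join_centres :: "'d::finite dtree \<Rightarrow> (nat \<Rightarrow> 'a) \<Rightarrow> (nat \<Rightarrow> 'a) \<Rightarrow> nat \<Rightarrow> 'a" where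
  "join_centres L cL cR t =
     (if t < length (leaf_regions L) then cL t else cR (t - length (leaf_regions L)))"

lemma tree_cost_Node:
  "tree_cost (Node i \<theta> L R) (join_centres L cL cR) x =
     (if x $ i \<le> \<theta> then tree_cost L cL x else tree_cost R cR x)"
proof -
  define nL where "nL = length (leaf_regions L)"
  define nR where "nR = length (leaf_regions R)"
  have "tree_cost (Node i \<theta> L R) (join_centres L cL cR) x =
      (\<Sum>t<nL. indicator (leaf_regions L ! t \<inter> {x. x $ i \<le> \<theta>}) x * l1dist x (cL t)) +
      (\<Sum>t<nR. indicator (leaf_regions R ! t \<inter> {x. \<theta> < x $ i}) x * l1dist x (cR t))"
    unfolding tree_cost_def
    by (simp only: leaf_regions.simps length_append length_map nL_def[symmetric] nR_def[symmetric]
        sum_lessThan_add)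
      (intro arg_cong2[where f="(+)"] sum.cong refl; simp add: nL_def nR_def nth_append join_centres_def)
  then show ?thesis
    by (simp add: tree_cost_def nL_def nR_def indicator_inter_arith)
qed

lemma integrable_l1dist:
  assumes "finite_measure N" "\<And>j. integrable N (\<lambda>x::real ^ 'd. x $ j)"
  shows "integrable N (\<lambda>x. l1dist x c)"
  unfolding l1dist_def using assms
  by (intro Bochner_Integration.integrable_sum integrable_abs Bochner_Integration.integrable_diff
      finite_measure.integrable_const)

lemma integrable_indicator_l1dist:
  assumes "finite_measure N" "sets N = sets borel" "\<And>j. integrable N (\<lambda>x::real ^ 'd. x $ j)"
    and "A \<in> sets borel"
  shows "integrable N (\<lambda>x. indicator A x * l1dist x c)"
  using integrable_mult_indicator[of A N "\<lambda>x. l1dist x c"] integrable_l1dist[OF assms(1,3)] assms(2,4)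
  by simp

lemma integral_tree_cost:
  assumes "finite_measure N" "sets N = sets borel" "\<And>j. integrable N (\<lambda>x::real ^ 'd. x $ j)"
  shows "integrable N (tree_cost T c)"
    and "(\<integral>x. tree_cost T c x \<partial>N) =
           (\<Sum>t<length (leaf_regions T). \<integral>x. indicator (leaf_regions T ! t) x * l1dist x (c t) \<partial>N)"
proof -
  have int: "integrable N (\<lambda>x. indicator (leaf_regions T ! t) x * l1dist x (c t))"
    if "t \<in> {..<length (leaf_regions T)}" for t
    using leaf_regions_borel[of _ T] that by (intro integrable_indicator_l1dist assms) auto
  show "integrable N (tree_cost T c)"
    unfolding tree_cost_def[abs_def] using int by (rule Bochner_Integration.integrable_sum)
  show "(\<integral>x. tree_cost T c x \<partial>N) =
      (\<Sum>t<length (leaf_regions T). \<integral>x. indicator (leaf_regions T ! t) x * l1dist x (c t) \<partial>N)"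
    unfolding tree_cost_def using int by (rule Bochner_Integration.integral_sum)
qed

definition separating_tree :: "(nat \<Rightarrow> real ^ 'd) \<Rightarrow> nat set \<Rightarrow> 'd dtree \<Rightarrow> (nat \<Rightarrow> real ^ 'd) \<Rightarrow> bool"
  where "separating_tree mu S T c \<longleftrightarrow>
     length (leaf_regions T) = card S \<and>
     (\<forall>A\<in>set (leaf_regions T). card {k\<in>S. mu k \<in> A} = 1) \<and>
     (\<forall>x. \<exists>k\<in>S. tree_cost T c x = l1dist x (mu k))"

lemma separating_tree_Leaf: "separating_tree mu {k} Leaf (\<lambda>_. mu k)"
  by (simp add: separating_tree_def tree_cost_Leaf)

lemma card_split_halfspaces:
  fixes mu :: "nat \<Rightarrow> 'a::linorder ^ 'd"
  assumes "finite S"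
  shows "card S = card {k\<in>S. mu k $ i \<le> \<theta>} + card {k\<in>S. \<theta> < mu k $ i}"
proof -
  have "card S = card ({k\<in>S. mu k $ i \<le> \<theta>} \<union> {k\<in>S. \<theta> < mu k $ i})"
    by (rule arg_cong[where f=card]) (auto simp: not_less)
  also have "\<dots> = card {k\<in>S. mu k $ i \<le> \<theta>} + card {k\<in>S. \<theta> < mu k $ i}"
    using assms by (intro card_Un_disjoint) auto
  finally show ?thesis .
qed

lemma separating_tree_Node:
  assumes "separating_tree mu {k\<in>S. mu k $ i \<le> \<theta>} L cL"
    and "separating_tree mu {k\<in>S. \<theta> < mu k $ i} R cR" and "finite S"
  shows "separating_tree mu S (Node i \<theta> L R) (join_centres L cL cR)"
proof -
  let ?SL = "{k\<in>S. mu k $ i \<le> \<theta>}" and ?SR = "{k\<in>S. \<theta> < mu k $ i}"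
  have "card S = card ?SL + card ?SR" using \<open>finite S\<close> by (rule card_split_halfspaces)
  moreover have "card {k\<in>S. mu k \<in> A} = 1" if "A \<in> set (leaf_regions (Node i \<theta> L R))" for A
  proof -
    from that obtain A' where "A' \<in> set (leaf_regions L) \<and> A = A' \<inter> {x. x $ i \<le> \<theta>} \<or>
        A' \<in> set (leaf_regions R) \<and> A = A' \<inter> {x. \<theta> < x $ i}"
      by auto
    then show ?thesis
    proof
      assume A': "A' \<in> set (leaf_regions L) \<and> A = A' \<inter> {x. x $ i \<le> \<theta>}"
      then have "{k\<in>S. mu k \<in> A} = {k\<in>?SL. mu k \<in> A'}" by auto
      then show ?thesis using assms(1) A' by (simp add: separating_tree_def)
    next
      assume A': "A' \<in> set (leaf_regions R) \<and> A = A' \<inter> {x. \<theta> < x $ i}"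
      then have "{k\<in>S. mu k \<in> A} = {k\<in>?SR. mu k \<in> A'}" by auto
      then show ?thesis using assms(2) A' by (simp add: separating_tree_def)
    qed
  qed
  moreover have "\<exists>k\<in>S. tree_cost (Node i \<theta> L R) (join_centres L cL cR) x = l1dist x (mu k)" for x
    using assms(1,2) unfolding separating_tree_def tree_cost_Node by (cases "x $ i \<le> \<theta>") force+
  ultimately show ?thesis using assms(1,2) by (simp add: separating_tree_def)
qed

lemma tree_cost_le_l1dist_add:
  assumes "separating_tree mu S T c" and "\<And>l. l \<in> S \<Longrightarrow> l1dist y (mu l) \<le> w"
  shows "tree_cost T c x \<le> l1dist x y + w"
proof -
  obtain l where "l \<in> S" "tree_cost T c x = l1dist x (mu l)"
    using assms(1) by (auto simp: separating_tree_def)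
  then show ?thesis using l1dist_triangle[of x "mu l" y] assms(2) by force
qed

definition opposite_side :: "'d::finite \<Rightarrow> real \<Rightarrow> real ^ 'd \<Rightarrow> (real ^ 'd) set" where
  "opposite_side i \<theta> y = (if y $ i \<le> \<theta> then {x. \<theta> < x $ i} else {x. x $ i \<le> \<theta>})"

lemma opposite_side_borel [measurable]: "opposite_side i \<theta> y \<in> sets borel"
  by (simp add: opposite_side_def)

lemma tree_cost_Node_same_side:
  "x \<notin> opposite_side i \<theta> y \<Longrightarrow> tree_cost (Node i \<theta> L R) (join_centres L cL cR) x =
     (if y $ i \<le> \<theta> then tree_cost L cL x else tree_cost R cR x)"
  by (auto simp: tree_cost_Node opposite_side_def)

lemma is_decision_tree_if_separating:
  "separating_tree mu {..<K} T c \<Longrightarrow> is_decision_tree K mu T"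
  by (simp add: separating_tree_def is_decision_tree_def lessThan_def)

section \<open>Building the tree\<close>

lemma symmetric_tail_le:
  fixes N :: "(real ^ 'd) measure" and m :: "real ^ 'd"
  assumes "prob_space N" and sets_N: "sets N = sets borel"
    and sym: "distr N borel (\<lambda>x. 2 *\<^sub>R m - x) = N"
    and sq: "integrable N (\<lambda>x. (x $ j)^2)" and mean: "(\<integral>x. x $ j \<partial>N) = m $ j" and "r > 0"
  shows "measure N {x. r \<le> x $ j - m $ j} \<le> (\<integral>x. (x $ j - m $ j)^2 \<partial>N) / (2 * r^2)"
    and "measure N {x. r \<le> m $ j - x $ j} \<le> (\<integral>x. (x $ j - m $ j)^2 \<partial>N) / (2 * r^2)"
proof -
  interpret prob_space N by fact
  have space_N: "space N = UNIV" using sets_eq_imp_space_eq[OF sets_N] by simp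
  define A where "A = {x::real ^ 'd. r \<le> x $ j - m $ j}"
  define B where "B = {x::real ^ 'd. r \<le> m $ j - x $ j}"
  have A_borel: "A \<in> sets borel" and B_borel: "B \<in> sets borel"
    unfolding A_def B_def by (intro borel_closed closed_Collect_le continuous_intros)+
  have reflect: "(\<lambda>x. 2 *\<^sub>R m - x) \<in> borel_measurable N"
    unfolding measurable_cong_sets[OF sets_N refl] by (intro borel_measurable_continuous_onI continuous_intros)
  have "measure N A = measure (distr N borel (\<lambda>x. 2 *\<^sub>R m - x)) A" by (simp add: sym)
  also have "\<dots> = measure N ((\<lambda>x. 2 *\<^sub>R m - x) -` A \<inter> space N)"
    using reflect A_borel by (rule measure_distr)
  also have "(\<lambda>x. 2 *\<^sub>R m - x) -` A \<inter> space N = B" by (auto simp: A_def B_def space_N)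
  finally have AB: "measure N A = measure N B" .
  have "prob {x\<in>space N. r \<le> \<bar>x $ j - expectation (\<lambda>x. x $ j)\<bar>} \<le> variance (\<lambda>x. x $ j) / r^2"
    using sq \<open>r > 0\<close> by (intro Chebyshev_inequality) (simp_all add: measurable_cong_sets[OF sets_N refl])
  moreover have "{x\<in>space N. r \<le> \<bar>x $ j - expectation (\<lambda>x. x $ j)\<bar>} = A \<union> B"
    by (auto simp: A_def B_def space_N mean)
  moreover have "measure N (A \<union> B) = measure N A + measure N B"
    using A_borel B_borel \<open>r > 0\<close> sets_N by (intro finite_measure_Union) (auto simp: A_def B_def)
  ultimately have "2 * measure N A \<le> (\<integral>x. (x $ j - m $ j)^2 \<partial>N) / r^2"
    using AB by (simp add: mean)
  then show "measure N A \<le> (\<integral>x. (x $ j - m $ j)^2 \<partial>N) / (2 * r^2)"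
    and "measure N B \<le> (\<integral>x. (x $ j - m $ j)^2 \<partial>N) / (2 * r^2)"
    using AB by (simp_all add: field_simps)
qed

lemma cubic_split_le:
  fixes x y :: real
  assumes "1 \<le> x" "1 \<le> y"
  shows "x^2 * (x - 1) + y^2 * (y - 1) + (x + y - 1) * (3 * (x + y) - 2) \<le> (x + y)^2 * (x + y - 1)"
proof -
  have "0 \<le> (x - 1) * (y - 1)" using assms by simp
  then have "x + y - 1 \<le> x * y" by (simp add: algebra_simps)
  then have "(x + y - 1) * (3 * (x + y) - 2) \<le> x * y * (3 * (x + y) - 2)"
    using assms by (intro mult_right_mono) auto
  then show ?thesis by (simp add: power2_eq_square algebra_simps)
qed

lemma excess_budget_step:
  fixes a b s W \<Sigma> Q X XL XR :: real
  assumes "1 \<le> a" "1 \<le> b" "0 < s" "s \<le> W" "0 \<le> \<Sigma>"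
    and "X \<le> XL + XR + W * \<Sigma> / 2 * Q"
    and "XL \<le> 10 * a^2 * (a - 1) * \<Sigma> / s" "XR \<le> 10 * b^2 * (b - 1) * \<Sigma> / s"
    and "Q \<le> 20 * (a + b - 1) * (3 * (a + b) - 2) / W^2"
  shows "X \<le> 10 * (a + b)^2 * (a + b - 1) * \<Sigma> / s"
proof -
  have "W * \<Sigma> / 2 * Q \<le> W * \<Sigma> / 2 * (20 * (a + b - 1) * (3 * (a + b) - 2) / W^2)"
    using assms by (intro mult_left_mono) auto
  also have "\<dots> = 10 * (a + b - 1) * (3 * (a + b) - 2) * \<Sigma> / W"
    using assms(3,4) by (simp add: power2_eq_square field_simps)
  also have "\<dots> \<le> 10 * (a + b - 1) * (3 * (a + b) - 2) * \<Sigma> / s"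
    using assms(1-5) by (intro divide_left_mono) auto
  finally have "W * \<Sigma> / 2 * Q \<le> 10 * (a + b - 1) * (3 * (a + b) - 2) * \<Sigma> / s" .
  moreover have "10 * (a^2 * (a - 1) + b^2 * (b - 1) + (a + b - 1) * (3 * (a + b) - 2)) * \<Sigma> / s
      = 10 * a^2 * (a - 1) * \<Sigma> / s + 10 * b^2 * (b - 1) * \<Sigma> / s
        + 10 * (a + b - 1) * (3 * (a + b) - 2) * \<Sigma> / s"
    using assms(3) by (simp add: field_simps)
  ultimately have "X \<le> 10 * (a^2 * (a - 1) + b^2 * (b - 1) + (a + b - 1) * (3 * (a + b) - 2)) * \<Sigma> / s"
    using assms(6-8) by linarith
  also have "\<dots> \<le> 10 * ((a + b)^2 * (a + b - 1)) * \<Sigma> / s"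
    using cubic_split_le[OF assms(1,2)] assms(3,5)
    by (intro divide_right_mono mult_right_mono mult_left_mono) auto
  finally show ?thesis by (simp add: mult.assoc)
qed

locale separated_symmetric_mixture =
  fixes K :: nat and nu :: "nat \<Rightarrow> (real ^ 'd) measure"
    and mu :: "nat \<Rightarrow> real ^ 'd" and \<sigma> :: "'d \<Rightarrow> real" and s :: real
  assumes prob: "\<And>k. k < K \<Longrightarrow> prob_space (nu k)"
    and sets_nu: "\<And>k. k < K \<Longrightarrow> sets (nu k) = sets borel"
    and symmetric: "\<And>k. k < K \<Longrightarrow> distr (nu k) borel (\<lambda>x. 2 *\<^sub>R mu k - x) = nu k"
    and mean: "\<And>k j. k < K \<Longrightarrow> (\<integral>x. x $ j \<partial>nu k) = mu k $ j"
    and sq_int: "\<And>k j. k < K \<Longrightarrow> integrable (nu k) (\<lambda>x. (x $ j)^2)"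
    and var: "\<And>k j. k < K \<Longrightarrow> (\<integral>x. (x $ j - mu k $ j)^2 \<partial>nu k) = (\<sigma> j)^2"
    and sigma_pos: "\<And>j. \<sigma> j > 0"
    and s_pos: "s > 0"
    and separated: "\<And>k l. k < K \<Longrightarrow> l < K \<Longrightarrow> k \<noteq> l \<Longrightarrow> \<exists>j. s * \<sigma> j \<le> \<bar>mu k $ j - mu l $ j\<bar>"
begin

lemma measure_opposite_side_le:
  assumes "k < K" "mu k $ i \<noteq> \<theta>"
  shows "measure (nu k) (opposite_side i \<theta> (mu k)) \<le> (\<sigma> i)^2 / (2 * (mu k $ i - \<theta>)^2)"
proof -
  interpret prob_space "nu k" by (rule prob[OF assms(1)])
  note tail = symmetric_tail_le[OF prob[OF assms(1)] sets_nu[OF assms(1)] symmetric[OF assms(1)]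
      sq_int[OF assms(1)] mean[OF assms(1)], unfolded var[OF assms(1)]]
  have "{x. r \<le> x $ i - mu k $ i} \<in> sets borel" "{x. r \<le> mu k $ i - x $ i} \<in> sets borel" for r
    by (intro borel_closed closed_Collect_le continuous_intros)+
  then have sets: "{x. r \<le> x $ i - mu k $ i} \<in> events" "{x. r \<le> mu k $ i - x $ i} \<in> events" for r
    using sets_nu[OF assms(1)] by auto
  show ?thesis
  proof (cases "mu k $ i \<le> \<theta>")
    case True
    then have "measure (nu k) (opposite_side i \<theta> (mu k)) \<le> measure (nu k) {x. \<theta> - mu k $ i \<le> x $ i - mu k $ i}"
      by (intro finite_measure_mono sets) (auto simp: opposite_side_def)
    also have "\<dots> \<le> (\<sigma> i)^2 / (2 * (\<theta> - mu k $ i)^2)"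
      using True assms(2) by (intro tail) auto
    finally show ?thesis by (simp add: power2_commute)
  next
    case False
    then have "measure (nu k) (opposite_side i \<theta> (mu k)) \<le> measure (nu k) {x. mu k $ i - \<theta> \<le> mu k $ i - x $ i}"
      by (intro finite_measure_mono sets) (auto simp: opposite_side_def)
    also have "\<dots> \<le> (\<sigma> i)^2 / (2 * (mu k $ i - \<theta>)^2)"
      using False by (intro tail) auto
    finally show ?thesis .
  qed
qed

lemma exists_widest_coordinate:
  assumes S: "S \<subseteq> {..<K}" "2 \<le> card S"
  shows "\<exists>i W k l. s \<le> W \<and> (\<forall>k\<in>S. \<forall>l\<in>S. l1dist (mu k) (mu l) \<le> W * (\<Sum>j\<in>UNIV. \<sigma> j)) \<and>
     k \<in> S \<and> l \<in> S \<and> mu l $ i - mu k $ i = \<sigma> i * W \<and> (\<forall>m\<in>S. mu k $ i \<le> mu m $ i \<and> mu m $ i \<le> mu l $ i)"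
proof -
  have fin: "finite S" using S(1) finite_nat_iff_bounded by blast
  have "S \<noteq> {}" using S(2) by auto
  define lo where "lo j = Min ((\<lambda>k. mu k $ j) ` S)" for j
  define hi where "hi j = Max ((\<lambda>k. mu k $ j) ` S)" for j
  have lo_hi: "lo j \<le> mu k $ j" "mu k $ j \<le> hi j" if "k \<in> S" for j k
    using fin that by (auto simp: lo_def hi_def)
  define spread where "spread j = (hi j - lo j) / \<sigma> j" for j
  have "Max (range spread) \<in> range spread" by (rule Max_in) simp_all
  then obtain i where "spread i = Max (range spread)" by (metis rangeE)
  then have i: "spread j \<le> spread i" for j by simp
  define W where "W = spread i"
  have coord_le: "\<bar>mu k $ j - mu l $ j\<bar> \<le> \<sigma> j * W" if "k \<in> S" "l \<in> S" for j k l
  proof -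
    have "\<bar>mu k $ j - mu l $ j\<bar> \<le> hi j - lo j"
      using lo_hi[OF that(1), of j] lo_hi[OF that(2), of j] by linarith
    also have "\<dots> = \<sigma> j * spread j" using sigma_pos[of j] by (simp add: spread_def)
    also have "\<dots> \<le> \<sigma> j * W" using i sigma_pos[of j] by (simp add: W_def)
    finally show ?thesis .
  qed
  have "s \<le> W"
  proof -
    obtain k l where "k \<in> S" "l \<in> S" "k \<noteq> l"
      using S(2) card_le_Suc0_iff_eq[OF fin] by (metis not_less_eq_eq numeral_2_eq_2)
    then obtain j where "s * \<sigma> j \<le> \<bar>mu k $ j - mu l $ j\<bar>" using separated S(1) by blast
    with coord_le[OF \<open>k \<in> S\<close> \<open>l \<in> S\<close>, of j] have "s * \<sigma> j \<le> W * \<sigma> j"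
      by (simp add: mult.commute)
    then show ?thesis using sigma_pos[of j] by simp
  qed
  moreover have "\<forall>k\<in>S. \<forall>l\<in>S. l1dist (mu k) (mu l) \<le> W * (\<Sum>j\<in>UNIV. \<sigma> j)"
    unfolding l1dist_def sum_distrib_left using coord_le
    by (intro ballI sum_mono) (simp add: mult.commute)
  moreover obtain k l where "k \<in> S" "lo i = mu k $ i" "l \<in> S" "hi i = mu l $ i"
    using fin \<open>S \<noteq> {}\<close> Min_in[of "(\<lambda>k. mu k $ i) ` S"] Max_in[of "(\<lambda>k. mu k $ i) ` S"]
    unfolding lo_def hi_def by fastforce
  moreover have "hi i - lo i = \<sigma> i * W" using sigma_pos[of i] by (simp add: W_def spread_def)
  ultimately show ?thesis using lo_hi by metis
qed

lemma exists_cut: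
  assumes S: "S \<subseteq> {..<K}" "2 \<le> card S"
  shows "\<exists>i \<theta> W. s \<le> W \<and> (\<forall>k\<in>S. \<forall>l\<in>S. l1dist (mu k) (mu l) \<le> W * (\<Sum>j\<in>UNIV. \<sigma> j)) \<and>
     {k\<in>S. mu k $ i \<le> \<theta>} \<noteq> {} \<and> {k\<in>S. \<theta> < mu k $ i} \<noteq> {} \<and> (\<forall>k\<in>S. mu k $ i \<noteq> \<theta>) \<and>
     (\<Sum>k\<in>S. (\<sigma> i)^2 / (mu k $ i - \<theta>)^2) \<le> 20 * (real (card S) - 1) * (3 * real (card S) - 2) / W^2"
proof -
  obtain i W k l where W: "s \<le> W" "\<forall>k\<in>S. \<forall>l\<in>S. l1dist (mu k) (mu l) \<le> W * (\<Sum>j\<in>UNIV. \<sigma> j)"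
      and kl: "k \<in> S" "l \<in> S" "mu l $ i - mu k $ i = \<sigma> i * W"
      "\<forall>m\<in>S. mu k $ i \<le> mu m $ i \<and> mu m $ i \<le> mu l $ i"
    using exists_widest_coordinate[OF S] by blast
  have "finite S" using S(1) finite_nat_iff_bounded by blast
  moreover have "0 < \<sigma> i * W" using W(1) s_pos sigma_pos[of i] by simp
  ultimately have "\<exists>\<theta>. mu k $ i < \<theta> \<and> \<theta> < mu l $ i \<and> (\<forall>m\<in>S. mu m $ i \<noteq> \<theta>) \<and>
      (\<Sum>m\<in>S. 1 / (mu m $ i - \<theta>)^2)
        \<le> 20 * (real (card S) - 1) * (3 * real (card S) - 2) / (mu l $ i - mu k $ i)^2"
    using kl by (intro exists_threshold) auto
  then obtain \<theta> where \<theta>: "mu k $ i < \<theta>" "\<theta> < mu l $ i" "\<forall>m\<in>S. mu m $ i \<noteq> \<theta>"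
      "(\<Sum>m\<in>S. 1 / (mu m $ i - \<theta>)^2)
         \<le> 20 * (real (card S) - 1) * (3 * real (card S) - 2) / (mu l $ i - mu k $ i)^2"
    by blast
  have "(\<Sum>m\<in>S. (\<sigma> i)^2 / (mu m $ i - \<theta>)^2) = (\<sigma> i)^2 * (\<Sum>m\<in>S. 1 / (mu m $ i - \<theta>)^2)"
    by (simp add: sum_distrib_left)
  also have "\<dots> \<le> 20 * (real (card S) - 1) * (3 * real (card S) - 2) / W^2"
    using mult_left_mono[OF \<theta>(4), of "(\<sigma> i)^2"] sigma_pos[of i] by (simp add: kl(3) power_mult_distrib)
  finally have "(\<Sum>m\<in>S. (\<sigma> i)^2 / (mu m $ i - \<theta>)^2)
      \<le> 20 * (real (card S) - 1) * (3 * real (card S) - 2) / W^2" .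
  moreover have "{m\<in>S. mu m $ i \<le> \<theta>} \<noteq> {}" "{m\<in>S. \<theta> < mu m $ i} \<noteq> {}"
    using kl(1,2) \<theta>(1,2) by force+
  ultimately show ?thesis using W \<theta>(3) by blast
qed

lemma integral_opposite_side_le:
  assumes "k < K" "mu k $ i \<noteq> \<theta>" "0 \<le> w"
  shows "integrable (nu k) (\<lambda>x. indicator (opposite_side i \<theta> (mu k)) x * w)"
    and "(\<integral>x. indicator (opposite_side i \<theta> (mu k)) x * w \<partial>nu k) \<le> w / 2 * ((\<sigma> i)^2 / (mu k $ i - \<theta>)^2)"
proof -
  interpret prob_space "nu k" by (rule prob[OF assms(1)])
  have side: "opposite_side i \<theta> (mu k) \<in> events" using sets_nu[OF assms(1)] by simp
  then show "integrable (nu k) (\<lambda>x. indicator (opposite_side i \<theta> (mu k)) x * w)"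
    by (simp add: emeasure_eq_measure)
  from side have "(\<integral>x. indicator (opposite_side i \<theta> (mu k)) x * w \<partial>nu k)
      = measure (nu k) (opposite_side i \<theta> (mu k)) * w"
    by simp
  also have "\<dots> \<le> (\<sigma> i)^2 / (2 * (mu k $ i - \<theta>)^2) * w"
    using measure_opposite_side_le[OF assms(1,2)] assms(3) by (rule mult_right_mono)
  finally show "(\<integral>x. indicator (opposite_side i \<theta> (mu k)) x * w \<partial>nu k) \<le> w / 2 * ((\<sigma> i)^2 / (mu k $ i - \<theta>)^2)"
    by (simp add: field_simps)
qed

definition excess_dominated :: "nat set \<Rightarrow> 'd dtree \<Rightarrow> (nat \<Rightarrow> real ^ 'd) \<Rightarrow> (nat \<Rightarrow> real ^ 'd \<Rightarrow> real) \<Rightarrow> bool"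
  where "excess_dominated S T c E \<longleftrightarrow> (\<forall>k\<in>S. integrable (nu k) (E k) \<and>
     (\<forall>x. 0 \<le> E k x \<and> tree_cost T c x \<le> l1dist x (mu k) + E k x))"

(* A point of component k pays extra only on the opposite side of the cut from mu k, and there
   at most the l1-diameter w; integral_opposite_side_le bounds the expected extra cost. *)
lemma excess_dominated_Node:
  fixes S :: "nat set" and i :: 'd and \<theta> :: real and SL SR :: "nat set"
  defines "SL \<equiv> {k\<in>S. mu k $ i \<le> \<theta>}" and "SR \<equiv> {k\<in>S. \<theta> < mu k $ i}"
  assumes S: "S \<subseteq> {..<K}" "\<forall>k\<in>S. mu k $ i \<noteq> \<theta>"
    and diam: "\<forall>k\<in>S. \<forall>l\<in>S. l1dist (mu k) (mu l) \<le> w" and "0 \<le> w"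
    and L: "separating_tree mu SL TL cL" "excess_dominated SL TL cL EL"
    and R: "separating_tree mu SR TR cR" "excess_dominated SR TR cR ER"
  shows "\<exists>E. excess_dominated S (Node i \<theta> TL TR) (join_centres TL cL cR) E \<and>
     (\<Sum>k\<in>S. \<integral>x. E k x \<partial>nu k) \<le> (\<Sum>k\<in>SL. \<integral>x. EL k x \<partial>nu k) + (\<Sum>k\<in>SR. \<integral>x. ER k x \<partial>nu k)
        + w / 2 * (\<Sum>k\<in>S. (\<sigma> i)^2 / (mu k $ i - \<theta>)^2)"
proof -
  define Ec where "Ec k = (if mu k $ i \<le> \<theta> then EL k else ER k)" for k
  define E where "E k x = Ec k x + indicator (opposite_side i \<theta> (mu k)) x * w" for k x
  have fin: "finite S" using S(1) finite_nat_iff_bounded by blast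
  have Ec: "integrable (nu k) (Ec k)" "0 \<le> Ec k x" if "k \<in> S" for k x
    using that L(2) R(2) by (auto simp: Ec_def excess_dominated_def SL_def SR_def)
  note opposite = integral_opposite_side_le[OF _ _ \<open>0 \<le> w\<close>]
  have "tree_cost (Node i \<theta> TL TR) (join_centres TL cL cR) x \<le> l1dist x (mu k) + E k x"
    if "k \<in> S" for k x
  proof (cases "x \<in> opposite_side i \<theta> (mu k)")
    case True
    have "tree_cost (Node i \<theta> TL TR) (join_centres TL cL cR) x \<le> l1dist x (mu k) + w"
      using separating_tree_Node[OF L(1)[unfolded SL_def] R(1)[unfolded SR_def] fin] diam that
      by (intro tree_cost_le_l1dist_add) auto
    then show ?thesis using True Ec(2)[OF that, of x] by (simp add: E_def)
  next
    case False
    then show ?thesis using L(2) R(2) that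
      by (auto simp: tree_cost_Node_same_side E_def Ec_def excess_dominated_def SL_def SR_def)
  qed
  then have "excess_dominated S (Node i \<theta> TL TR) (join_centres TL cL cR) E"
    using Ec opposite(1) S \<open>0 \<le> w\<close> by (auto simp: excess_dominated_def E_def[abs_def])
  moreover have "(\<Sum>k\<in>S. \<integral>x. E k x \<partial>nu k)
      \<le> (\<Sum>k\<in>S. (\<integral>x. Ec k x \<partial>nu k) + w / 2 * ((\<sigma> i)^2 / (mu k $ i - \<theta>)^2))"
    using Ec(1) opposite S unfolding E_def by (intro sum_mono) (auto simp: subset_iff)
  moreover have "(\<Sum>k\<in>S. \<integral>x. Ec k x \<partial>nu k) = (\<Sum>k\<in>SL. \<integral>x. EL k x \<partial>nu k) + (\<Sum>k\<in>SR. \<integral>x. ER k x \<partial>nu k)"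
    unfolding Ec_def SL_def SR_def using fin by (simp add: if_distrib sum.If_cases Int_def not_le)
  ultimately show ?thesis by (auto simp: sum.distrib sum_distrib_left)
qed

definition tree_within_budget :: "nat set \<Rightarrow> 'd dtree \<Rightarrow> (nat \<Rightarrow> real ^ 'd) \<Rightarrow> (nat \<Rightarrow> real ^ 'd \<Rightarrow> real) \<Rightarrow> bool"
  where "tree_within_budget S T c E \<longleftrightarrow> separating_tree mu S T c \<and> excess_dominated S T c E \<and>
     (\<Sum>k\<in>S. \<integral>x. E k x \<partial>nu k) \<le> 10 * real (card S)^2 * (real (card S) - 1) * (\<Sum>j\<in>UNIV. \<sigma> j) / s"

lemma tree_within_budget_Leaf: "tree_within_budget {k} Leaf (\<lambda>_. mu k) (\<lambda>_ _. 0)"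
  by (simp add: tree_within_budget_def separating_tree_Leaf excess_dominated_def tree_cost_Leaf)

lemma tree_within_budget_Node:
  fixes S :: "nat set" and i :: 'd and \<theta> :: real and SL SR :: "nat set"
  defines "SL \<equiv> {k\<in>S. mu k $ i \<le> \<theta>}" and "SR \<equiv> {k\<in>S. \<theta> < mu k $ i}"
  assumes S: "S \<subseteq> {..<K}" "\<forall>k\<in>S. mu k $ i \<noteq> \<theta>" "SL \<noteq> {}" "SR \<noteq> {}"
    and W: "s \<le> W" "\<forall>k\<in>S. \<forall>l\<in>S. l1dist (mu k) (mu l) \<le> W * (\<Sum>j\<in>UNIV. \<sigma> j)"
      "(\<Sum>k\<in>S. (\<sigma> i)^2 / (mu k $ i - \<theta>)^2) \<le> 20 * (real (card S) - 1) * (3 * real (card S) - 2) / W^2"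
    and L: "tree_within_budget SL TL cL EL" and R: "tree_within_budget SR TR cR ER"
  shows "\<exists>E. tree_within_budget S (Node i \<theta> TL TR) (join_centres TL cL cR) E"
proof -
  have fin: "finite S" using S(1) finite_nat_iff_bounded by blast
  then have card_S: "card S = card SL + card SR" "0 < card SL" "0 < card SR"
    using S(3,4) by (auto simp: SL_def SR_def card_split_halfspaces card_gt_0_iff)
  have "0 < (\<Sum>j\<in>UNIV. \<sigma> j)" using sigma_pos by (intro sum_pos) auto
  then obtain E where E: "excess_dominated S (Node i \<theta> TL TR) (join_centres TL cL cR) E"
      "(\<Sum>k\<in>S. \<integral>x. E k x \<partial>nu k) \<le> (\<Sum>k\<in>SL. \<integral>x. EL k x \<partial>nu k) + (\<Sum>k\<in>SR. \<integral>x. ER k x \<partial>nu k)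
         + W * (\<Sum>j\<in>UNIV. \<sigma> j) / 2 * (\<Sum>k\<in>S. (\<sigma> i)^2 / (mu k $ i - \<theta>)^2)"
    using excess_dominated_Node[OF S(1,2) W(2)] L R W(1) s_pos
    unfolding SL_def SR_def tree_within_budget_def by fastforce
  have "(\<Sum>k\<in>S. \<integral>x. E k x \<partial>nu k) \<le> 10 * (real (card SL) + real (card SR))^2
      * (real (card SL) + real (card SR) - 1) * (\<Sum>j\<in>UNIV. \<sigma> j) / s"
    using card_S s_pos W \<open>0 < (\<Sum>j\<in>UNIV. \<sigma> j)\<close> E(2) L R
    by (intro excess_budget_step) (auto simp: tree_within_budget_def)
  moreover have "separating_tree mu S (Node i \<theta> TL TR) (join_centres TL cL cR)"
    using L R fin unfolding SL_def SR_def tree_within_budget_def by (intro separating_tree_Node) auto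
  ultimately show ?thesis using E(1) card_S(1) by (auto simp: tree_within_budget_def)
qed

lemma exists_tree_within_budget:
  "S \<subseteq> {..<K} \<Longrightarrow> S \<noteq> {} \<Longrightarrow> \<exists>T c E. tree_within_budget S T c E"
proof (induction "card S" arbitrary: S rule: less_induct)
  case less
  have fin: "finite S" using less.prems(1) finite_nat_iff_bounded by blast
  show ?case
  proof (cases "card S = 1")
    case True
    then obtain k where "S = {k}" by (auto simp: card_Suc_eq)
    then show ?thesis using tree_within_budget_Leaf by blast
  next
    case False
    moreover have "card S \<noteq> 0" using less.prems(2) fin by simp
    ultimately have "2 \<le> card S" by linarith
    then obtain i \<theta> W where cut: "s \<le> W" "\<forall>k\<in>S. \<forall>l\<in>S. l1dist (mu k) (mu l) \<le> W * (\<Sum>j\<in>UNIV. \<sigma> j)"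
        "{k\<in>S. mu k $ i \<le> \<theta>} \<noteq> {}" "{k\<in>S. \<theta> < mu k $ i} \<noteq> {}" "\<forall>k\<in>S. mu k $ i \<noteq> \<theta>"
        "(\<Sum>k\<in>S. (\<sigma> i)^2 / (mu k $ i - \<theta>)^2) \<le> 20 * (real (card S) - 1) * (3 * real (card S) - 2) / W^2"
      using exists_cut[OF less.prems(1)] by blast
    have "card {k\<in>S. mu k $ i \<le> \<theta>} < card S" "card {k\<in>S. \<theta> < mu k $ i} < card S"
      using card_split_halfspaces[OF fin, of mu i \<theta>] cut(3,4) fin by (auto simp: card_gt_0_iff)
    then obtain TL cL EL TR cR ER where
        "tree_within_budget {k\<in>S. mu k $ i \<le> \<theta>} TL cL EL" "tree_within_budget {k\<in>S. \<theta> < mu k $ i} TR cR ER"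
      using less.hyps less.prems(1) cut(3,4) by (metis (no_types, lifting) mem_Collect_eq subset_iff)
    then show ?thesis using tree_within_budget_Node[OF less.prems(1) cut(5,3,4,1,2,6)] by blast
  qed
qed

end

section \<open>The price bound\<close>

lemma ENR_le:
  assumes "k < K" "l < K" "k \<noteq> l"
  shows "\<exists>j. ENR K mu \<sigma> \<le> (mu k $ j - mu l $ j)^2 / (\<sigma> j)^2"
proof -
  define P where "P = {(k, l). k < K \<and> l < K \<and> k \<noteq> l}"
  define f where "f = (\<lambda>(k, l). Max (range (\<lambda>j. (mu k $ j - mu l $ j)^2 / (\<sigma> j)^2)))"
  have "finite P" unfolding P_def by (rule finite_subset[of _ "{..<K} \<times> {..<K}"]) auto
  moreover have "(k, l) \<in> P" using assms by (simp add: P_def)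
  ultimately have "ENR K mu \<sigma> \<le> f (k, l)"
    unfolding ENR_def P_def[symmetric] f_def[symmetric] by (intro Min_le imageI finite_imageI)
  moreover have "Max (range (\<lambda>j. (mu k $ j - mu l $ j)^2 / (\<sigma> j)^2))
      \<in> range (\<lambda>j. (mu k $ j - mu l $ j)^2 / (\<sigma> j)^2)"
    by (rule Max_in) simp_all
  ultimately show ?thesis unfolding f_def by (auto simp del: Max_in)
qed

lemma ENR_pos:
  assumes "2 \<le> K" "\<And>j. \<sigma> j > 0" "\<And>k l. k < K \<Longrightarrow> l < K \<Longrightarrow> k \<noteq> l \<Longrightarrow> mu k \<noteq> mu l"
  shows "0 < ENR K mu \<sigma>"
proof -
  define P where "P = {(k, l). k < K \<and> l < K \<and> k \<noteq> l}"
  define f where "f = (\<lambda>(k, l). Max (range (\<lambda>j. (mu k $ j - mu l $ j)^2 / (\<sigma> j)^2)))"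
  have "finite P" unfolding P_def by (rule finite_subset[of _ "{..<K} \<times> {..<K}"]) auto
  moreover have "(0, 1) \<in> P" using assms(1) by (simp add: P_def)
  ultimately have "ENR K mu \<sigma> \<in> f ` P" unfolding ENR_def P_def[symmetric] f_def[symmetric]
    by (intro Min_in) auto
  then obtain k l where kl: "(k, l) \<in> P" "ENR K mu \<sigma> = f (k, l)" by auto
  then obtain j where "mu k $ j \<noteq> mu l $ j" using assms(3) by (auto simp: P_def vec_eq_iff)
  then have "0 < (mu k $ j - mu l $ j)^2 / (\<sigma> j)^2" using assms(2)[of j] by simp
  also have "\<dots> \<le> f (k, l)" by (simp add: f_def)
  finally show ?thesis using kl(2) by simp
qed

lemma sqrt_ENR_separation:
  assumes "k < K" "l < K" "k \<noteq> l" "\<And>j. \<sigma> j > 0"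
  shows "\<exists>j. sqrt (ENR K mu \<sigma>) * \<sigma> j \<le> \<bar>mu k $ j - mu l $ j\<bar>"
proof -
  obtain j where "ENR K mu \<sigma> \<le> (mu k $ j - mu l $ j)^2 / (\<sigma> j)^2" using ENR_le assms(1-3) by blast
  then have "sqrt (ENR K mu \<sigma>) \<le> \<bar>mu k $ j - mu l $ j\<bar> / \<sigma> j"
    using assms(4)[of j] by (metis real_sqrt_abs real_sqrt_divide real_sqrt_le_iff abs_of_pos)
  then show ?thesis using assms(4)[of j] by (auto simp: field_simps)
qed

lemma mix_exp_l1dist:
  assumes "\<And>k. k < K \<Longrightarrow> finite_measure (nu k)" "\<And>k j. k < K \<Longrightarrow> integrable (nu k) (\<lambda>x. x $ j)"
  shows "mix_exp K p nu mu l1dist = (\<Sum>j\<in>UNIV. mix_exp K p nu mu (\<lambda>x m. \<bar>x $ j - m $ j\<bar>))"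
proof -
  have "(\<integral>x. l1dist x (mu k) \<partial>nu k) = (\<Sum>j\<in>UNIV. \<integral>x. \<bar>x $ j - mu k $ j\<bar> \<partial>nu k)" if "k < K" for k
    unfolding l1dist_def using assms that
    by (intro Bochner_Integration.integral_sum integrable_abs Bochner_Integration.integrable_diff
        finite_measure.integrable_const) auto
  then show ?thesis
    by (simp add: mix_exp_def sum_distrib_left sum.swap[of _ "{..<K}"])
qed

lemma mix_exp_square_deviation:
  assumes "(\<Sum>k<K. p k) = 1" "\<And>k. k < K \<Longrightarrow> (\<integral>x. (x $ j - mu k $ j)^2 \<partial>nu k) = (\<sigma> j)^2"
  shows "mix_exp K p nu mu (\<lambda>x m. \<bar>x $ j - m $ j\<bar>^2) = (\<sigma> j)^2"
  using assms by (simp add: mix_exp_def sum_distrib_right[symmetric])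

lemma tree_cost_medians_le:
  assumes "\<forall>t<length (leaf_regions T). is_leaf_median K p nu (leaf_regions T ! t) (med t)"
    and "\<And>k. k < K \<Longrightarrow> finite_measure (nu k)" "\<And>k. k < K \<Longrightarrow> sets (nu k) = sets borel"
    and "\<And>k j. k < K \<Longrightarrow> integrable (nu k) (\<lambda>x. x $ j)"
  shows "(\<Sum>k<K. p k * (\<integral>x. tree_cost T med x \<partial>nu k)) \<le> (\<Sum>k<K. p k * (\<integral>x. tree_cost T c x \<partial>nu k))"
proof -
  let ?cost = "\<lambda>c t. \<Sum>k<K. p k * (\<integral>x. indicator (leaf_regions T ! t) x * l1dist x c \<partial>nu k)"
  have eq: "(\<Sum>k<K. p k * (\<integral>x. tree_cost T c' x \<partial>nu k)) = (\<Sum>t<length (leaf_regions T). ?cost (c' t) t)"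
    for c'
    using integral_tree_cost(2)[OF assms(2-4)]
    by (simp add: sum_distrib_left sum.swap[of _ "{..<K}"])
  have "(\<Sum>t<length (leaf_regions T). ?cost (med t) t) \<le> (\<Sum>t<length (leaf_regions T). ?cost (c t) t)"
    using assms(1) by (rule_tac sum_mono) (simp add: is_leaf_median_def)
  then show ?thesis by (simp only: eq)
qed

lemma price_le_one_plus_excess:
  assumes p_nonneg: "\<And>k. k < K \<Longrightarrow> 0 \<le> p k"
    and fin: "\<And>k. k < K \<Longrightarrow> finite_measure (nu k)" and sets: "\<And>k. k < K \<Longrightarrow> sets (nu k) = sets borel"
    and coord: "\<And>k j. k < K \<Longrightarrow> integrable (nu k) (\<lambda>x. x $ j)"
    and med: "\<forall>t<length (leaf_regions T). is_leaf_median K p nu (leaf_regions T ! t) (med t)"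
    and E: "\<And>k. k < K \<Longrightarrow> integrable (nu k) (E k)"
      "\<And>k x. k < K \<Longrightarrow> tree_cost T c x \<le> l1dist x (mu k) + E k x"
    and D: "0 < mix_exp K p nu mu l1dist"
  shows "price K p nu mu T med \<le> 1 + (\<Sum>k<K. p k * (\<integral>x. E k x \<partial>nu k)) / mix_exp K p nu mu l1dist"
proof -
  have "(\<Sum>k<K. p k * (\<integral>x. tree_cost T med x \<partial>nu k)) \<le> (\<Sum>k<K. p k * (\<integral>x. tree_cost T c x \<partial>nu k))"
    using med fin sets coord by (rule tree_cost_medians_le)
  also have "\<dots> \<le> (\<Sum>k<K. p k * ((\<integral>x. l1dist x (mu k) \<partial>nu k) + (\<integral>x. E k x \<partial>nu k)))"
  proof (intro sum_mono mult_left_mono)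
    fix k assume "k \<in> {..<K}"
    then have k: "k < K" by simp
    have l1: "integrable (nu k) (\<lambda>x. l1dist x (mu k))" using fin coord k by (intro integrable_l1dist)
    have "(\<integral>x. tree_cost T c x \<partial>nu k) \<le> (\<integral>x. l1dist x (mu k) + E k x \<partial>nu k)"
      using integral_tree_cost(1)[OF fin sets coord, OF k k k] l1 E[OF k] by (intro integral_mono) auto
    also have "\<dots> = (\<integral>x. l1dist x (mu k) \<partial>nu k) + (\<integral>x. E k x \<partial>nu k)"
      using l1 E(1)[OF k] by (rule Bochner_Integration.integral_add)
    finally show "(\<integral>x. tree_cost T c x \<partial>nu k) \<le> (\<integral>x. l1dist x (mu k) \<partial>nu k) + (\<integral>x. E k x \<partial>nu k)" .
  qed (use p_nonneg in simp)
  also have "\<dots> = mix_exp K p nu mu l1dist + (\<Sum>k<K. p k * (\<integral>x. E k x \<partial>nu k))"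
    by (simp add: mix_exp_def distrib_left sum.distrib)
  finally have "price K p nu mu T med \<le> (mix_exp K p nu mu l1dist + (\<Sum>k<K. p k * (\<integral>x. E k x \<partial>nu k)))
      / mix_exp K p nu mu l1dist"
    unfolding price_def tree_cost_def[abs_def] using D by (intro divide_right_mono) auto
  then show ?thesis using D by (simp add: add_divide_distrib)
qed

lemma ten_le_price_constant: "10 \<le> 4 + 2 * pi^2 / 3"
  using pi_gt3 power_strict_mono[of 3 pi 2] by simp

locale explainability_setting = separated_symmetric_mixture K nu mu \<sigma> s
  for K nu mu \<sigma> s +
  fixes p :: "nat \<Rightarrow> real" and \<alpha> \<beta> :: real
  assumes p_nonneg: "\<And>k. k < K \<Longrightarrow> 0 \<le> p k"
    and p_sum: "(\<Sum>k<K. p k) = 1"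
    and p_bound: "\<And>k. k < K \<Longrightarrow> p k \<le> \<alpha> / real K"
    and alpha_nonneg: "0 \<le> \<alpha>"
    and mean_int: "\<And>k j. k < K \<Longrightarrow> integrable (nu k) (\<lambda>x. x $ j)"
    and beta: "\<And>j. \<beta> * mix_exp K p nu mu (\<lambda>x m. \<bar>x $ j - m $ j\<bar>)
                  \<ge> sqrt (mix_exp K p nu mu (\<lambda>x m. \<bar>x $ j - m $ j\<bar>^2))"
begin

lemma K_pos: "0 < K"
  using p_sum by (metis gr0I lessThan_0 sum.empty zero_neq_one)

lemma finite_measure_nu: "k < K \<Longrightarrow> finite_measure (nu k)"
  using prob by (rule prob_space.finite_measure)

lemma sum_sigma_le: "(\<Sum>j\<in>UNIV. \<sigma> j) \<le> \<beta> * mix_exp K p nu mu l1dist"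
proof -
  have "\<sigma> j \<le> \<beta> * mix_exp K p nu mu (\<lambda>x m. \<bar>x $ j - m $ j\<bar>)" for j
    using beta[of j] mix_exp_square_deviation[where nu=nu and mu=mu and \<sigma>=\<sigma> and j=j, OF p_sum var]
      sigma_pos[of j]
    by simp
  then show ?thesis
    using mix_exp_l1dist[OF finite_measure_nu mean_int, where p=p and mu=mu]
    by (simp add: sum_distrib_left sum_mono)
qed

lemma mix_exp_l1dist_pos: "0 < mix_exp K p nu mu l1dist" and beta_pos: "0 < \<beta>"
proof -
  have "0 \<le> mix_exp K p nu mu l1dist"
    unfolding mix_exp_def l1dist_def using p_nonneg
    by (intro sum_nonneg mult_nonneg_nonneg integral_nonneg_AE) auto
  moreover have "0 < (\<Sum>j\<in>UNIV. \<sigma> j)" using sigma_pos by (intro sum_pos) auto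
  then have "0 < \<beta> * mix_exp K p nu mu l1dist" using sum_sigma_le by linarith
  ultimately show "0 < mix_exp K p nu mu l1dist" "0 < \<beta>" by (auto simp: zero_less_mult_iff)
qed

lemma weighted_excess_le:
  assumes E_nonneg: "\<And>k. k < K \<Longrightarrow> 0 \<le> (\<integral>x. E k x \<partial>nu k)"
    and E_sum: "(\<Sum>k<K. \<integral>x. E k x \<partial>nu k) \<le> 10 * real K^2 * (real K - 1) * (\<Sum>j\<in>UNIV. \<sigma> j) / s"
  shows "(\<Sum>k<K. p k * (\<integral>x. E k x \<partial>nu k)) / mix_exp K p nu mu l1dist
           \<le> 10 * \<alpha> * \<beta> * real K * (real K - 1) / s"
proof -
  define D where "D = mix_exp K p nu mu l1dist"
  have "(\<Sum>k<K. p k * (\<integral>x. E k x \<partial>nu k)) \<le> (\<Sum>k<K. \<alpha> / real K * (\<integral>x. E k x \<partial>nu k))"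
    using p_bound E_nonneg by (intro sum_mono mult_right_mono) auto
  also have "\<dots> = \<alpha> / real K * (\<Sum>k<K. \<integral>x. E k x \<partial>nu k)"
    by (simp add: sum_distrib_left)
  also have "\<dots> \<le> \<alpha> / real K * (10 * real K^2 * (real K - 1) * (\<beta> * D) / s)"
  proof (intro mult_left_mono)
    have "10 * real K^2 * (real K - 1) * (\<Sum>j\<in>UNIV. \<sigma> j) \<le> 10 * real K^2 * (real K - 1) * (\<beta> * D)"
      using sum_sigma_le K_pos by (intro mult_left_mono) (auto simp: D_def)
    then show "(\<Sum>k<K. \<integral>x. E k x \<partial>nu k) \<le> 10 * real K^2 * (real K - 1) * (\<beta> * D) / s"
      using E_sum s_pos by (meson divide_right_mono less_imp_le order_trans)
  qed (use alpha_nonneg in simp)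
  also have "\<dots> = 10 * \<alpha> * \<beta> * real K * (real K - 1) / s * D"
    using K_pos by (simp add: power2_eq_square)
  finally show ?thesis
    using mix_exp_l1dist_pos by (simp add: D_def divide_le_eq)
qed

lemma exists_tree_with_small_price:
  "\<exists>T. is_decision_tree K mu T \<and>
     (\<forall>med. (\<forall>t < length (leaf_regions T). is_leaf_median K p nu (leaf_regions T ! t) (med t)) \<longrightarrow>
        price K p nu mu T med \<le> 1 + 10 * \<alpha> * \<beta> * real K * (real K - 1) / s)"
proof -
  obtain T c E where T: "separating_tree mu {..<K} T c" "excess_dominated {..<K} T c E"
      "(\<Sum>k<K. \<integral>x. E k x \<partial>nu k) \<le> 10 * real K^2 * (real K - 1) * (\<Sum>j\<in>UNIV. \<sigma> j) / s"
    using exists_tree_within_budget[of "{..<K}"] K_pos by (auto simp: tree_within_budget_def)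
  have E: "integrable (nu k) (E k)" "0 \<le> E k x" "tree_cost T c x \<le> l1dist x (mu k) + E k x"
    if "k < K" for k x
    using T(2) that by (auto simp: excess_dominated_def)
  have "is_decision_tree K mu T" using T(1) by (rule is_decision_tree_if_separating)
  moreover have "price K p nu mu T med \<le> 1 + 10 * \<alpha> * \<beta> * real K * (real K - 1) / s"
    if "\<forall>t < length (leaf_regions T). is_leaf_median K p nu (leaf_regions T ! t) (med t)" for med
  proof -
    have "price K p nu mu T med
        \<le> 1 + (\<Sum>k<K. p k * (\<integral>x. E k x \<partial>nu k)) / mix_exp K p nu mu l1dist"
      using p_nonneg finite_measure_nu sets_nu mean_int that E(1,3) mix_exp_l1dist_pos
      by (rule price_le_one_plus_excess)
    also have "\<dots> \<le> 1 + 10 * \<alpha> * \<beta> * real K * (real K - 1) / s"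
      using E(2) T(3) by (simp add: weighted_excess_le integral_nonneg_AE)
    finally show ?thesis .
  qed
  ultimately show ?thesis by blast
qed

end

theorem theorem3:
  fixes K :: nat and p :: "nat \<Rightarrow> real" and nu :: "nat \<Rightarrow> (real ^ 'd) measure"
    and mu :: "nat \<Rightarrow> real ^ 'd" and \<sigma> :: "'d \<Rightarrow> real"
    and \<alpha> \<beta> :: real
  assumes p_nonneg: "\<And>k. k < K \<Longrightarrow> p k \<ge> 0"
    and p_sum: "(\<Sum>k<K. p k) = 1"
    and alpha: "\<alpha> \<ge> 1"
    and p_bound: "\<And>k. k < K \<Longrightarrow> p k \<le> \<alpha> / real K"
    and prob: "\<And>k. k < K \<Longrightarrow> prob_space (nu k)"
    and sets_nu: "\<And>k. k < K \<Longrightarrow> sets (nu k) = sets borel"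
    and disc_or_ac: "\<And>k. k < K \<Longrightarrow>
          (\<exists>S. countable S \<and> (AE x in nu k. x \<in> S)) \<or> absolutely_continuous lborel (nu k)"
    and symmetric: "\<And>k. k < K \<Longrightarrow> distr (nu k) borel (\<lambda>x. 2 *\<^sub>R mu k - x) = nu k"
    and mean_int: "\<And>k j. k < K \<Longrightarrow> integrable (nu k) (\<lambda>x. x $ j)"
    and mean: "\<And>k j. k < K \<Longrightarrow> (\<integral>x. x $ j \<partial>nu k) = mu k $ j"
    and sq_int: "\<And>k j. k < K \<Longrightarrow> integrable (nu k) (\<lambda>x. (x $ j)^2)"
    and var: "\<And>k j. k < K \<Longrightarrow> (\<integral>x. (x $ j - mu k $ j)^2 \<partial>nu k) = (\<sigma> j)^2"
    and sigma_pos: "\<And>j. \<sigma> j > 0"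
    and distinct_means: "\<And>k l. k < K \<Longrightarrow> l < K \<Longrightarrow> k \<noteq> l \<Longrightarrow> mu k \<noteq> mu l"
    and beta: "\<And>i. \<beta> * mix_exp K p nu mu (\<lambda>x m. \<bar>x $ i - m $ i\<bar>)
                  \<ge> sqrt (mix_exp K p nu mu (\<lambda>x m. \<bar>x $ i - m $ i\<bar>^2))"
  shows "\<exists>T. is_decision_tree K mu T \<and>
           (\<forall>med. (\<forall>t < length (leaf_regions T).
                      is_leaf_median K p nu (leaf_regions T ! t) (med t)) \<longrightarrow>
              price K p nu mu T med
                \<le> 1 + (4 + 2 * pi^2 / 3) * \<alpha> * \<beta> * real K * (real K - 1)
                      / sqrt (ENR K mu \<sigma>))"
proof -
  have "K \<noteq> 0" using p_sum by (metis lessThan_0 sum.empty zero_neq_one)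
  \<comment> \<open>For \<open>K = 1\<close> the ENR is a minimum over the empty set; any positive scale serves.\<close>
  define s where "s = (if 2 \<le> K then sqrt (ENR K mu \<sigma>) else 1)"
  have "0 < s" using ENR_pos[OF _ sigma_pos distinct_means] by (simp add: s_def)
  have separated: "\<exists>j. s * \<sigma> j \<le> \<bar>mu k $ j - mu l $ j\<bar>" if "k < K" "l < K" "k \<noteq> l" for k l
    using sqrt_ENR_separation[OF that sigma_pos] that by (simp add: s_def)
  interpret explainability_setting K nu mu \<sigma> s p \<alpha> \<beta>
  proof (intro explainability_setting.intro separated_symmetric_mixture.intro explainability_setting_axioms.intro)
    show "0 \<le> \<alpha>" using alpha by simp
  qed (fact prob sets_nu symmetric mean sq_int var sigma_pos \<open>0 < s\<close> separated
      p_nonneg p_sum p_bound mean_int beta)+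
  have "10 * \<alpha> * \<beta> * real K * (real K - 1) / s
      \<le> (4 + 2 * pi^2 / 3) * \<alpha> * \<beta> * real K * (real K - 1) / sqrt (ENR K mu \<sigma>)"
  proof (cases "2 \<le> K")
    case True
    have "0 \<le> \<alpha> * \<beta> * real K * (real K - 1) / s" using alpha beta_pos \<open>0 < s\<close> True by simp
    with ten_le_price_constant have "10 * (\<alpha> * \<beta> * real K * (real K - 1) / s)
        \<le> (4 + 2 * pi^2 / 3) * (\<alpha> * \<beta> * real K * (real K - 1) / s)"
      by (rule mult_right_mono)
    then show ?thesis using True by (simp add: s_def mult.assoc)
  next
    case False
    then have "K = 1" using \<open>K \<noteq> 0\<close> by linarith
    then show ?thesis by simp
  qed
  then show ?thesis using exists_tree_with_small_price by (meson add_left_mono order_trans)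
qed

end
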